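(* Let $N\ge2$, let $q\in\mathbb{C}$ with $[k]_q\ne0$ for $1\le k\le N$, and let $z_1,\dots,z_N$ lie in the open unit disk. Fix $\sigma\in\mathbb{S}_N$. For $1\le i\le N-1$ let $T_i:\mathbb{S}_N\to\mathbb{S}_N$ be the map $T_i\sigma=\tilde\sigma$ with $\tilde\sigma(N-i)=\sigma(N-i+1)$, $\tilde\sigma(N-i+1)=\sigma(N-i)$ and $\tilde\sigma(k)=\sigma(k)$ otherwise, and let $T_0$ be the identity. Then $$\sum_{i=0}^{N-1}q^i\,F^{(N)}_{(T_i\cdots T_0)\sigma}\Big|_{z_{\sigma(N)}=0}=F^{(N-1)}_{\sigma'},$$ where $F^{(N-1)}_{\sigma'}:=\Phi_{N-1}(z_{\sigma(1)},\dots,z_{\sigma(N-1)})$.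
   Context: $[k]_q=1+q+\cdots+q^{k-1}$, $[k]_q!=[1]_q\cdots[k]_q$. For $M\ge1$ and $w_1,\dots,w_M$ in the open unit disk define $t_i=\dfrac{w_1\cdots w_{M-i}}{1-w_1\cdots w_{M-i}}$ for $1\le i\le M-1$ and $$\Phi_M(w_1,\dots,w_M)=\frac{1}{1-w_1\cdots w_M}\sum_{(m_1,\dots,m_n)}\frac{1}{[m_1]_q!\cdots[m_n]_q!}\,t_{m_1}t_{m_1+m_2}\cdots t_{m_1+\cdots+m_{n-1}},$$ the sum running over all compositions $(m_1,\dots,m_n)$ of $M$ (ordered tuples of positive integers summing to $M$, any $n\ge1$; for $n=1$ the product of $t$'s is $1$). For $\sigma\in\mathbb{S}_M$ set $F^{(M)}_\sigma=\Phi_M(z_{\sigma(1)},\dots,z_{\sigma(M)})$. *)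

theory Defs
  imports Complex_Main "HOL-Combinatorics.Transposition" "HOL-Combinatorics.Permutations"
begin

definition qint :: "complex \<Rightarrow> nat \<Rightarrow> complex" where
  "qint q k = (\<Sum>j<k. q ^ j)"

definition qfact :: "complex \<Rightarrow> nat \<Rightarrow> complex" where
  "qfact q m = (\<Prod>k=1..m. qint q k)"

definition compositions :: "nat \<Rightarrow> nat list set" where
  "compositions M = {ms. (\<forall>m\<in>set ms. 0 < m) \<and> sum_list ms = M}"

definition tt :: "complex list \<Rightarrow> nat \<Rightarrow> complex" where
  "tt w i = (let P = prod_list (take (length w - i) w) in P / (1 - P))"

definition Phi :: "complex \<Rightarrow> complex list \<Rightarrow> complex" where
  "Phi q w = 1 / (1 - prod_list w) *
     (\<Sum>ms\<in>compositions (length w).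
        (1 / (\<Prod>m\<leftarrow>ms. qfact q m)) *
        (\<Prod>j\<in>{1..<length ms}. tt w (sum_list (take j ms))))"

definition F :: "complex \<Rightarrow> nat \<Rightarrow> (nat \<Rightarrow> complex) \<Rightarrow> (nat \<Rightarrow> nat) \<Rightarrow> complex" where
  "F q M z \<sigma> = Phi q (map (\<lambda>k. z (\<sigma> k)) [1..<M+1])"

definition Tmap :: "nat \<Rightarrow> nat \<Rightarrow> (nat \<Rightarrow> nat) \<Rightarrow> (nat \<Rightarrow> nat)" where
  "Tmap N i \<sigma> = (if i = 0 then \<sigma> else \<sigma> \<circ> transpose (N - i) (N - i + 1))"

fun Tcomp :: "nat \<Rightarrow> nat \<Rightarrow> (nat \<Rightarrow> nat) \<Rightarrow> (nat \<Rightarrow> nat)" where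
  "Tcomp N 0 \<sigma> = Tmap N 0 \<sigma>"
| "Tcomp N (Suc i) \<sigma> = Tmap N (Suc i) (Tcomp N i \<sigma>)"

end

theory Submission
  imports Defs
begin

(*
  Write P_k for the product of the first k letters of a word w and
  tfrac w k = P_k / (1 - P_k).  Then Phi_M(w) = 1/(1 - P_M) * comp_sum q (tfrac w) M, where
  comp_sum q h M sums, over compositions (m_1,...,m_n) of M, the weight
  1/([m_1]_q! ... [m_n]_q!) * h(M - m_1) * h(M - m_1 - m_2) * ... .
  Splitting off the first part m_1 gives the recursion
     comp_sum q h M = sum_{m=1..M} 1/[m]_q! * (h(M-m) * comp_sum q h (M-m))   (1 for m = M).
  In the permuted word (T_i ... T_0) sigma the letter z_{sigma N}, set to 0, sits at position
  N - i, so its weight function agrees with that of w' = (z_{sigma 1},...,z_{sigma (N-1)}) up to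
  N - 1 - i and vanishes beyond; hence only the terms with m > i survive.  Summing with
  weights q^i turns the coefficient of the m-th term into [m]_q, which cancels against [m]_q!
  and shifts the recursion by one, leaving (1 + tfrac w' (N-1)) * comp_sum q (tfrac w') (N-1),
  which is Phi_{N-1}(w').
*)

section \<open>Sums over compositions\<close>

text \<open>The composition sum with a weight function indexed by the mass still to be distributed.\<close>
definition comp_sum :: "complex \<Rightarrow> (nat \<Rightarrow> complex) \<Rightarrow> nat \<Rightarrow> complex" where
  "comp_sum q h M = (\<Sum>ms\<in>compositions M.
        (1 / (\<Prod>m\<leftarrow>ms. qfact q m)) *
        (\<Prod>j\<in>{1..<length ms}. h (M - sum_list (take j ms))))"

definition tfrac :: "complex list \<Rightarrow> nat \<Rightarrow> complex" where
  "tfrac w k = (let P = prod_list (take k w) in P / (1 - P))"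

lemma Phi_comp_sum: "Phi q w = 1 / (1 - prod_list w) * comp_sum q (tfrac w) (length w)"
  unfolding Phi_def comp_sum_def tfrac_def tt_def by simp

lemma compositions_0: "compositions 0 = {[]}"
  by (auto simp: compositions_def sum_list_eq_0_iff) (metis list.set_sel(1) less_irrefl)

lemma compositions_Cons:
  assumes "M > 0"
  shows "compositions M = (\<lambda>(m, ms). m # ms) ` (SIGMA m:{1..M}. compositions (M - m))"
proof (intro equalityI subsetI)
  fix xs assume xs: "xs \<in> compositions M"
  with assms obtain m ms where "xs = m # ms" by (cases xs) (auto simp: compositions_def)
  with xs show "xs \<in> (\<lambda>(m, ms). m # ms) ` (SIGMA m:{1..M}. compositions (M - m))"
    by (force simp: compositions_def)
qed (auto simp: compositions_def)

lemma finite_compositions: "finite (compositions M)"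
proof (induction M rule: less_induct)
  case (less M)
  show ?case
  proof (cases "M = 0")
    case False
    then show ?thesis
      unfolding compositions_Cons[OF False[unfolded neq0_conv]]
      by (intro finite_imageI finite_SigmaI) (auto intro: less)
  qed (simp add: compositions_0)
qed

lemma prod_partial_sums_Cons:
  fixes M m :: nat and ms :: "nat list" and h :: "nat \<Rightarrow> 'a::comm_monoid_mult"
  assumes "ms \<noteq> []"
  shows "(\<Prod>j\<in>{1..<length (m # ms)}. h (M - sum_list (take j (m # ms))))
       = h (M - m) * (\<Prod>j\<in>{1..<length ms}. h ((M - m) - sum_list (take j ms)))"
proof -
  have "{1..<length (m # ms)} = insert 1 (Suc ` {1..<length ms})"
    using assms by (auto simp: image_Suc_atLeastLessThan)
  then have "(\<Prod>j\<in>{1..<length (m # ms)}. h (M - sum_list (take j (m # ms))))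
      = h (M - m) * (\<Prod>j\<in>Suc ` {1..<length ms}. h (M - sum_list (take j (m # ms))))"
    by (simp only:) (subst prod.insert, auto)
  also have "\<dots> = h (M - m) * (\<Prod>j\<in>{1..<length ms}. h ((M - m) - sum_list (take j ms)))"
    by (subst prod.reindex) (auto simp: diff_diff_left intro!: prod.cong)
  finally show ?thesis .
qed

text \<open>The contribution of the compositions with first part m.\<close>
definition comp_term :: "complex \<Rightarrow> (nat \<Rightarrow> complex) \<Rightarrow> nat \<Rightarrow> nat \<Rightarrow> complex" where
  "comp_term q h M m = 1 / qfact q m * (if m = M then 1 else h (M - m) * comp_sum q h (M - m))"

lemma comp_sum_0: "comp_sum q h 0 = 1"
  by (simp add: comp_sum_def compositions_0)

lemma comp_sum_rec:
  assumes "M > 0"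
  shows "comp_sum q h M = (\<Sum>m=1..M. comp_term q h M m)"
proof -
  let ?f = "\<lambda>M ms. (1 / (\<Prod>m\<leftarrow>ms. qfact q m)) *
        (\<Prod>j\<in>{1..<length ms}. h (M - sum_list (take j ms)))"
  have inj: "inj_on (\<lambda>(m, ms). m # ms) (SIGMA m:{1..M}. compositions (M - m))"
    by (auto simp: inj_on_def)
  have "comp_sum q h M = (\<Sum>m=1..M. \<Sum>ms\<in>compositions (M - m). ?f M (m # ms))"
    unfolding comp_sum_def compositions_Cons[OF assms] sum.reindex[OF inj]
    by (subst sum.Sigma) (auto simp: finite_compositions case_prod_beta)
  also have "\<dots> = (\<Sum>m=1..M. comp_term q h M m)"
  proof (rule sum.cong[OF refl])
    fix m assume m: "m \<in> {1..M}"
    show "(\<Sum>ms\<in>compositions (M - m). ?f M (m # ms)) = comp_term q h M m"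
    proof (cases "m = M")
      case False
      have "?f M (m # ms) = 1 / qfact q m * (h (M - m) * ?f (M - m) ms)"
        if "ms \<in> compositions (M - m)" for ms
      proof -
        have "ms \<noteq> []" using that m False by (auto simp: compositions_def)
        then show ?thesis unfolding prod_partial_sums_Cons[OF \<open>ms \<noteq> []\<close>] by simp
      qed
      then have "(\<Sum>ms\<in>compositions (M - m). ?f M (m # ms))
                 = (\<Sum>ms\<in>compositions (M - m). 1 / qfact q m * (h (M - m) * ?f (M - m) ms))"
        by (rule sum.cong[OF refl])
      with False show ?thesis
        by (simp add: comp_term_def comp_sum_def sum_distrib_left)
    qed (simp add: comp_term_def compositions_0)
  qed
  finally show ?thesis .
qed

lemma comp_sum_cong:
  "(\<And>k. 0 < k \<Longrightarrow> k < M \<Longrightarrow> h k = h' k) \<Longrightarrow> comp_sum q h M = comp_sum q h' M"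
proof (induction M rule: less_induct)
  case (less M)
  show ?case
  proof (cases "M = 0")
    case False
    have "comp_term q h M m = comp_term q h' M m" if "m \<in> {1..M}" for m
      using that less by (auto simp: comp_term_def intro!: less.IH)
    with False show ?thesis by (simp add: comp_sum_rec)
  qed (simp add: comp_sum_0)
qed

section \<open>The q-weighted sum of truncated composition sums\<close>

lemma comp_sum_truncated:
  assumes "i < M"
    and agree: "\<And>k. 0 < k \<Longrightarrow> k \<le> M - 1 - i \<Longrightarrow> h' k = h k"
    and vanish: "\<And>k. M - 1 - i < k \<Longrightarrow> k < M \<Longrightarrow> h' k = 0"
  shows "comp_sum q h' M = (\<Sum>m=1..M. if i < m then comp_term q h M m else 0)"
proof -
  have "comp_term q h' M m = (if i < m then comp_term q h M m else 0)" if m: "m \<in> {1..M}" for m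
  proof (cases "i < m")
    case True
    then have "comp_sum q h' (M - m) = comp_sum q h (M - m)"
      using m by (intro comp_sum_cong agree) auto
    with True m show ?thesis by (auto simp: comp_term_def agree)
  next
    case False
    with m \<open>i < M\<close> show ?thesis by (auto simp: comp_term_def vanish)
  qed
  with \<open>i < M\<close> show ?thesis by (simp add: comp_sum_rec)
qed

lemma sum_qpower_truncations:
  "(\<Sum>i<M. q ^ i * (\<Sum>m=1..M. if i < m then a m else 0)) = (\<Sum>m=1..M. qint q m * a m)"
proof -
  have "(\<Sum>i<M. q ^ i * (\<Sum>m=1..M. if i < m then a m else 0))
        = (\<Sum>i<M. \<Sum>m=1..M. if i < m then q ^ i * a m else 0)"
    by (simp add: sum_distrib_left if_distrib cong: if_cong)
  also have "\<dots> = (\<Sum>m=1..M. \<Sum>i<M. if i < m then q ^ i * a m else 0)"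
    by (rule sum.swap)
  also have "\<dots> = (\<Sum>m=1..M. \<Sum>i\<in>{i\<in>{..<M}. i < m}. q ^ i * a m)"
    by (intro sum.cong refl sum.inter_filter[symmetric]) simp
  also have "\<dots> = (\<Sum>m=1..M. qint q m * a m)"
  proof (rule sum.cong[OF refl])
    fix m assume "m \<in> {1..M}"
    then have "{i\<in>{..<M}. i < m} = {..<m}" by auto
    then show "(\<Sum>i\<in>{i\<in>{..<M}. i < m}. q ^ i * a m) = qint q m * a m"
      by (simp add: qint_def sum_distrib_right)
  qed
  finally show ?thesis .
qed

lemma qfact_Suc: "qfact q (Suc m) = qfact q m * qint q (Suc m)"
  by (simp add: qfact_def)

text \<open>Cancelling [m]_q against [m]_q! shifts the recursion for comp_sum down by one.\<close>
lemma sum_qint_comp_term: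
  assumes "M \<ge> 2" and qint_nz: "\<forall>k\<in>{1..M}. qint q k \<noteq> 0"
  shows "(\<Sum>m=1..M. qint q m * comp_term q h M m) = (1 + h (M - 1)) * comp_sum q h (M - 1)"
proof -
  obtain L where M: "M = Suc L" and L: "L \<ge> 1" using assms(1) by (cases M) auto
  define c where "c m = (if m = M then 1 else h (M - m) * comp_sum q h (M - m))" for m
  have "qint q m * comp_term q h M m = c m / qfact q (m - 1)" if m: "m \<in> {1..M}" for m
  proof -
    obtain m' where m': "m = Suc m'" using m by (cases m) auto
    have "qint q m \<noteq> 0" using m qint_nz by blast
    then show ?thesis by (simp add: comp_term_def c_def m' qfact_Suc)
  qed
  then have "(\<Sum>m=1..M. qint q m * comp_term q h M m) = (\<Sum>m=1..M. c m / qfact q (m - 1))"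
    by (rule sum.cong[OF refl])
  also have "\<dots> = c 1 / qfact q 0 + (\<Sum>m=Suc 1..Suc L. c m / qfact q (m - 1))"
    by (simp add: M sum.atLeast_Suc_atMost del: sum.cl_ivl_Suc)
  also have "(\<Sum>m=Suc 1..Suc L. c m / qfact q (m - 1)) = (\<Sum>m=1..L. comp_term q h L m)"
    by (subst sum.shift_bounds_cl_Suc_ivl) (auto simp: c_def comp_term_def M intro!: sum.cong)
  also have "\<dots> = comp_sum q h L"
    using L by (simp add: comp_sum_rec)
  finally show ?thesis
    using L by (simp add: c_def M qfact_def algebra_simps)
qed

theorem sum_qpower_comp_sum_truncations:
  assumes "M \<ge> 2" and "\<forall>k\<in>{1..M}. qint q k \<noteq> 0"
    and agree: "\<And>i k. i < M \<Longrightarrow> 0 < k \<Longrightarrow> k \<le> M - 1 - i \<Longrightarrow> H i k = h k"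
    and vanish: "\<And>i k. i < M \<Longrightarrow> M - 1 - i < k \<Longrightarrow> k < M \<Longrightarrow> H i k = 0"
  shows "(\<Sum>i<M. q ^ i * comp_sum q (H i) M) = (1 + h (M - 1)) * comp_sum q h (M - 1)"
proof -
  have "(\<Sum>i<M. q ^ i * comp_sum q (H i) M)
        = (\<Sum>i<M. q ^ i * (\<Sum>m=1..M. if i < m then comp_term q h M m else 0))"
    by (intro sum.cong refl arg_cong[where f="(*) _"] comp_sum_truncated agree vanish) auto
  also have "\<dots> = (\<Sum>m=1..M. qint q m * comp_term q h M m)"
    by (rule sum_qpower_truncations)
  also have "\<dots> = (1 + h (M - 1)) * comp_sum q h (M - 1)"
    by (rule sum_qint_comp_term[OF assms(1,2)])
  finally show ?thesis .
qed

section \<open>The permuted words\<close>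

lemma Tcomp_apply:
  "i < N \<Longrightarrow> Tcomp N i \<sigma> k = (if k < N - i then \<sigma> k else if k = N - i then \<sigma> N
      else if k \<le> N then \<sigma> (k - 1) else \<sigma> k)"
proof (induction i arbitrary: k)
  case (Suc i)
  then have "N - Suc i + 1 = N - i" by simp
  with Suc show ?case by (auto simp: Tmap_def transpose_def)
qed (simp add: Tmap_def)

lemma take_map_upt: "k \<le> N \<Longrightarrow> take k (map f [1..<N+1]) = map f [1..<k+1]"
  by (simp add: take_map take_upt del: upt_Suc)

lemma prod_take_Tcomp_word:
  fixes z :: "nat \<Rightarrow> complex"
  assumes perm: "\<sigma> permutes {1..N}" and "i < N" and "k \<le> N"
  shows "prod_list (take k (map (\<lambda>j. (z(\<sigma> N := 0)) (Tcomp N i \<sigma> j)) [1..<N+1]))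
       = (if k \<le> N - 1 - i then prod_list (take k (map (\<lambda>j. z (\<sigma> j)) [1..<N])) else 0)"
proof (cases "k \<le> N - 1 - i")
  case True
  have "\<sigma> j \<noteq> \<sigma> N" if "j \<in> {1..k}" for j
    using that True \<open>i < N\<close> permutes_inj[OF perm] unfolding inj_def by force
  then have word: "map (\<lambda>j. (z(\<sigma> N := 0)) (Tcomp N i \<sigma> j)) [1..<k+1] = map (\<lambda>j. z (\<sigma> j)) [1..<k+1]"
    using True \<open>i < N\<close> by (auto simp: Tcomp_apply)
  have prefix: "take k (map (\<lambda>j. z (\<sigma> j)) [1..<N]) = map (\<lambda>j. z (\<sigma> j)) [1..<k+1]"
    using True \<open>i < N\<close> by (simp add: take_map take_upt del: upt_Suc)
  show ?thesis
    by (simp only: take_map_upt[OF \<open>k \<le> N\<close>] word prefix if_P[OF True])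
next
  case False
  then have "N - i \<in> set [1..<k+1]" using \<open>i < N\<close> by auto
  moreover have "(z(\<sigma> N := 0)) (Tcomp N i \<sigma> (N - i)) = 0"
    using \<open>i < N\<close> by (simp add: Tcomp_apply)
  ultimately have "0 \<in> set (take k (map (\<lambda>j. (z(\<sigma> N := 0)) (Tcomp N i \<sigma> j)) [1..<N+1]))"
    unfolding take_map_upt[OF \<open>k \<le> N\<close>] by force
  with False show ?thesis by (simp only: if_not_P[OF False] if_False prod_list_zero_iff)
qed

lemma norm_prod_list_less_1:
  fixes xs :: "complex list"
  assumes "\<forall>x\<in>set xs. norm x < 1" and "xs \<noteq> []"
  shows "norm (prod_list xs) < 1"
  using assms
proof (induction xs)
  case (Cons x xs)
  then show ?case
    using mult_strict_mono[of "norm x" 1 "norm (prod_list xs)" 1]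
    by (cases "xs = []") (auto simp: norm_mult)
qed simp

text \<open>The prefactor 1/(1 - P) of Phi is 1 + tfrac at the full length, so Phi is itself a
  term of the shape produced by the q-weighted summation.\<close>
lemma Phi_one_plus_tfrac:
  assumes "\<forall>x\<in>set w. norm x < 1" and "w \<noteq> []"
  shows "Phi q w = (1 + tfrac w (length w)) * comp_sum q (tfrac w) (length w)"
proof -
  have "prod_list w \<noteq> 1"
    using norm_prod_list_less_1[OF assms] by (metis norm_one less_irrefl)
  then have "1 + tfrac w (length w) = 1 / (1 - prod_list w)"
    by (simp add: tfrac_def Let_def field_simps)
  then show ?thesis by (simp add: Phi_comp_sum)
qed

text \<open>With z_{sigma N} set to 0 the permuted word has product 0, so F reduces to a bare
  composition sum.\<close>
lemma F_Tcomp_comp_sum: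
  fixes z :: "nat \<Rightarrow> complex"
  assumes perm: "\<sigma> permutes {1..N}" and "i < N"
  shows "F q N (z(\<sigma> N := 0)) (Tcomp N i \<sigma>)
       = comp_sum q (tfrac (map (\<lambda>j. (z(\<sigma> N := 0)) (Tcomp N i \<sigma> j)) [1..<N+1])) N"
proof -
  let ?w = "map (\<lambda>j. (z(\<sigma> N := 0)) (Tcomp N i \<sigma> j)) [1..<N+1]"
  have "\<not> N \<le> N - 1 - i" using \<open>i < N\<close> by simp
  then have "prod_list ?w = 0"
    using prod_take_Tcomp_word[OF perm \<open>i < N\<close> order.refl, of z] by simp
  then show ?thesis by (simp add: F_def Phi_comp_sum del: upt_Suc)
qed

theorem lemma5:
  fixes N :: nat and q :: complex and z :: "nat \<Rightarrow> complex" and \<sigma> :: "nat \<Rightarrow> nat"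
  assumes "N \<ge> 2"
    and "\<forall>k\<in>{1..N}. qint q k \<noteq> 0"
    and "\<forall>i\<in>{1..N}. norm (z i) < 1"
    and "\<sigma> permutes {1..N}"
  shows "(\<Sum>i<N. q ^ i * F q N (z(\<sigma> N := 0)) (Tcomp N i \<sigma>)) = F q (N - 1) z \<sigma>"
proof -
  define u where "u = map (\<lambda>j. z (\<sigma> j)) [1..<N]"
  define w where "w i = map (\<lambda>j. (z(\<sigma> N := 0)) (Tcomp N i \<sigma> j)) [1..<N+1]" for i
  note prod_take = prod_take_Tcomp_word[OF assms(4), of _ _ z, folded u_def w_def]
  have "(\<Sum>i<N. q ^ i * F q N (z(\<sigma> N := 0)) (Tcomp N i \<sigma>))
        = (\<Sum>i<N. q ^ i * comp_sum q (tfrac (w i)) N)"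
    by (simp add: F_Tcomp_comp_sum[OF assms(4)] w_def)
  also have "\<dots> = (1 + tfrac u (N - 1)) * comp_sum q (tfrac u) (N - 1)"
    using assms(1,2) by (intro sum_qpower_comp_sum_truncations) (simp_all add: tfrac_def prod_take)
  also have "\<dots> = Phi q u"
    using assms(1,3) permutes_in_image[OF assms(4)]
    by (subst Phi_one_plus_tfrac) (auto simp: u_def)
  also have "\<dots> = F q (N - 1) z \<sigma>"
    using assms(1) by (simp add: F_def u_def)
  finally show ?thesis .
qed

end
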